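(* Let $\mathcal{E}^\infty$ denote the infinite prolongation of Pleba\'nski's second heavenly equation $$u_{xz}=u_{ty}+u_{yy}\,u_{zz}-u_{yz}^2$$ for a function $u(t,x,y,z)$, and let $\bar D_t,\bar D_x,\bar D_y,\bar D_z$ be the restrictions of the total derivatives $D_t,D_x,D_y,D_z$ to $\mathcal{E}^\infty$. On $\mathcal{E}^\infty\times\mathbb{R}^\infty$, with additional fibre coordinates $v_{i,j}$, $i,j\ge 0$ (where $v_{0,0}=v$, $v_{i,j}$ corresponds to $\partial^{i+j}v/\partial y^i\partial z^j$), define $$\widetilde D_y=\bar D_y+\sum_{i,j\ge0}v_{i+1,j}\frac{\partial}{\partial v_{i,j}},\qquad \widetilde D_z=\bar D_z+\sum_{i,j\ge0}v_{i,j+1}\frac{\partial}{\partial v_{i,j}},$$ $$\widetilde D_t=\bar D_t+\sum_{i,j\ge0}\widetilde D_y^{\,i}\widetilde D_z^{\,j}\big((u_{yz}+v_{0,0})\,v_{0,1}-u_{zz}\,v_{1,0}\big)\frac{\partial}{\partial v_{i,j}},$$ $$\widetilde D_x=\bar D_x+\sum_{i,j\ge0}\widetilde D_y^{\,i}\widetilde D_z^{\,j}\big(u_{yy}\,v_{0,1}-(u_{yz}-v_{0,0})\,v_{1,0}\big)\frac{\partial}{\partial v_{i,j}}.$$ Then the four vector fields $\widetilde D_t,\widetilde D_x,\widetilde D_y,\widetilde D_z$ pairwise commute; that is, the system $$v_t=(u_{yz}+v)\,v_z-u_{zz}\,v_y,\qquad v_x=u_{yy}\,v_z-(u_{yz}-v)\,v_y$$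 defines a differential covering (zero-curvature representation) of the second heavenly equation.
   Context: A differential covering of a PDE $\mathcal{E}$ with infinite prolongation $\mathcal{E}^\infty$ is given by extending the restricted total derivative operators $\bar D_t,\bar D_x,\bar D_y,\bar D_z$ to vector fields $\widetilde D_t,\widetilde D_x,\widetilde D_y,\widetilde D_z$ on $\mathcal{E}^\infty\times\mathbb{R}^\infty$ (new fibre coordinates) that project to the $\bar D$'s and commute pairwise; equivalently, the system of equations for the new dependent variable is compatible modulo $\mathcal{E}$ and its differential consequences. Here $u_{yz}$, $u_{yy}$, $u_{zz}$ denote the corresponding jet coordinates of second derivatives of $u$. *)

theory Defs
  imports "HOL-Analysis.Analysis"
begin

datatype var = Vt | Vx | Vy | Vz

text \<open>Coordinates on J^infinity x R^infinity: independent variables, jet coordinates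
  u_sigma (sigma a multi-index counting derivatives in t,x,y,z), and the new fibre
  coordinates v_{i,j}.\<close>
datatype coord = Base var | U "var \<Rightarrow> nat" | V nat nat

type_synonym pt = "coord \<Rightarrow> real"
type_synonym fn = "pt \<Rightarrow> real"
type_synonym vfield = "coord \<Rightarrow> fn"

definition mi :: "nat \<Rightarrow> nat \<Rightarrow> nat \<Rightarrow> nat \<Rightarrow> var \<Rightarrow> nat" where
  "mi a b c d = (\<lambda>w. case w of Vt \<Rightarrow> a | Vx \<Rightarrow> b | Vy \<Rightarrow> c | Vz \<Rightarrow> d)"

definition shift :: "var \<Rightarrow> (var \<Rightarrow> nat) \<Rightarrow> (var \<Rightarrow> nat)" where
  "shift a \<sigma> = \<sigma>(a := Suc (\<sigma> a))"

definition dep :: "fn \<Rightarrow> coord set" where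
  "dep G = {c. \<exists>p s. G (p(c := s)) \<noteq> G p}"

definition pd :: "coord \<Rightarrow> fn \<Rightarrow> fn" where
  "pd c G p = deriv (\<lambda>s. G (p(c := s))) (p c)"

text \<open>Action of a vector field sum_c X^c d/dc on a function depending on finitely many coordinates.\<close>
definition apply_vf :: "vfield \<Rightarrow> fn \<Rightarrow> fn" where
  "apply_vf X G p = (\<Sum>c\<in>dep G. X c p * pd c G p)"

definition lie_bracket :: "vfield \<Rightarrow> vfield \<Rightarrow> vfield" where
  "lie_bracket X Y c = (\<lambda>p. apply_vf X (Y c) p - apply_vf Y (X c) p)"

definition totD :: "var \<Rightarrow> vfield" where
  "totD a c = (case c of
      Base b \<Rightarrow> (\<lambda>p. if b = a then 1 else 0)
    | U \<sigma> \<Rightarrow> (\<lambda>p. p (U (shift a \<sigma>)))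
    | V i j \<Rightarrow> (\<lambda>p. 0))"

definition Dsig :: "(var \<Rightarrow> nat) \<Rightarrow> fn \<Rightarrow> fn" where
  "Dsig \<sigma> G = (apply_vf (totD Vt) ^^ \<sigma> Vt) ((apply_vf (totD Vx) ^^ \<sigma> Vx)
      ((apply_vf (totD Vy) ^^ \<sigma> Vy) ((apply_vf (totD Vz) ^^ \<sigma> Vz) G)))"

definition heavenly :: fn where
  "heavenly p = p (U (mi 0 1 0 1)) - p (U (mi 1 0 1 0))
      - p (U (mi 0 0 2 0)) * p (U (mi 0 0 0 2)) + (p (U (mi 0 0 1 1)))\<^sup>2"

text \<open>Infinite prolongation (times R^infinity, the v-coordinates being unconstrained).\<close>
definition Einf :: "pt set" where
  "Einf = {p. \<forall>\<sigma>. Dsig \<sigma> heavenly p = 0}"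

definition tDy :: vfield where
  "tDy c = (case c of V i j \<Rightarrow> (\<lambda>p. p (V (Suc i) j)) | _ \<Rightarrow> totD Vy c)"

definition tDz :: vfield where
  "tDz c = (case c of V i j \<Rightarrow> (\<lambda>p. p (V i (Suc j))) | _ \<Rightarrow> totD Vz c)"

definition Tgen :: fn where
  "Tgen p = (p (U (mi 0 0 1 1)) + p (V 0 0)) * p (V 0 1) - p (U (mi 0 0 0 2)) * p (V 1 0)"

definition Xgen :: fn where
  "Xgen p = p (U (mi 0 0 2 0)) * p (V 0 1) - (p (U (mi 0 0 1 1)) - p (V 0 0)) * p (V 1 0)"

definition tDgen :: "fn \<Rightarrow> var \<Rightarrow> vfield" where
  "tDgen R a c = (case c of
      V i j \<Rightarrow> (apply_vf tDy ^^ i) ((apply_vf tDz ^^ j) R)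
    | _ \<Rightarrow> totD a c)"

definition tD :: "var \<Rightarrow> vfield" where
  "tD a = (case a of Vt \<Rightarrow> tDgen Tgen Vt | Vx \<Rightarrow> tDgen Xgen Vx | Vy \<Rightarrow> tDy | Vz \<Rightarrow> tDz)"

end

theory Submission
  imports Defs
begin

text \<open>All four fields agree with the total derivatives on the jet coordinates, so their brackets
  vanish there. On the fibre coordinates every field satisfies
  \<open>tD a (V i j) = tDy\<^sup>i (tDz\<^sup>j (tD a (V 0 0)))\<close> (powers of \<open>apply_vf\<close>); since \<open>tDy\<close> and \<open>tDz\<close>
  visibly commute, all brackets with \<open>tDy\<close> or \<open>tDz\<close> vanish identically. For the remaining pair,
  the \<open>V i j\<close> component of \<open>[tD Vt, tD Vx]\<close> is \<open>tDy\<^sup>i (tDz\<^sup>j (tD Vt Xgen - tD Vx Tgen))\<close>, and a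
  direct computation gives \<open>tD Vt Xgen - tD Vx Tgen = v\<^sub>1\<^sub>0 D\<^sub>z E - v\<^sub>0\<^sub>1 D\<^sub>y E\<close> for the residual \<open>E\<close>
  of the equation. This lies in the differential ideal generated by \<open>E\<close>, which is stable under
  the covering fields and vanishes on \<open>Einf\<close>.

  Vector fields act through \<open>apply_vf\<close>, a sum over the coordinates a function depends on; on
  polynomials in the coordinates this set is finite and \<open>apply_vf\<close> is a derivation.\<close>

section \<open>Polynomial functions and vector fields\<close>

inductive polynomial_on :: "coord set \<Rightarrow> fn \<Rightarrow> bool" for C where
  const: "polynomial_on C (\<lambda>p. k)"
| coord: "c \<in> C \<Longrightarrow> polynomial_on C (\<lambda>p. p c)"
| add: "polynomial_on C G \<Longrightarrow> polynomial_on C H \<Longrightarrow> polynomial_on C (\<lambda>p. G p + H p)"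
| diff: "polynomial_on C G \<Longrightarrow> polynomial_on C H \<Longrightarrow> polynomial_on C (\<lambda>p. G p - H p)"
| mult: "polynomial_on C G \<Longrightarrow> polynomial_on C H \<Longrightarrow> polynomial_on C (\<lambda>p. G p * H p)"

abbreviation polynomial :: "fn \<Rightarrow> bool" where
  "polynomial \<equiv> polynomial_on UNIV"

lemma polynomial_on_mono: "polynomial_on C G \<Longrightarrow> C \<subseteq> D \<Longrightarrow> polynomial_on D G"
  by (induction rule: polynomial_on.induct) (auto intro: polynomial_on.intros)

lemma polynomial_on_polynomial: "polynomial_on C G \<Longrightarrow> polynomial G"
  by (erule polynomial_on_mono) simp

lemma dep_const [simp]: "dep (\<lambda>p. k) = {}"
  by (simp add: dep_def)

lemma dep_coord: "dep (\<lambda>p. p c) \<subseteq> {c}"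
  by (auto simp: dep_def)

lemma dep_binop: "dep (\<lambda>p. f (G p) (H p)) \<subseteq> dep G \<union> dep H"
proof
  fix c assume "c \<in> dep (\<lambda>p. f (G p) (H p))"
  then obtain p s where "f (G (p(c := s))) (H (p(c := s))) \<noteq> f (G p) (H p)"
    by (auto simp: dep_def)
  then have "G (p(c := s)) \<noteq> G p \<or> H (p(c := s)) \<noteq> H p" by auto
  then show "c \<in> dep G \<union> dep H" by (auto simp: dep_def)
qed

lemma dep_polynomial_on: "polynomial_on C G \<Longrightarrow> finite (dep G) \<and> dep G \<subseteq> C"
proof (induction rule: polynomial_on.induct)
  case (coord c)
  then show ?case using dep_coord[of c] finite_subset by blast
next
  case (add G H)
  then show ?case using dep_binop[of "(+)" G H] finite_subset by blast
next
  case (diff G H)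
  then show ?case using dep_binop[of "(-)" G H] finite_subset by blast
next
  case (mult G H)
  then show ?case using dep_binop[of "(*)" G H] finite_subset by blast
qed simp

lemma pd_eq_0: "c \<notin> dep G \<Longrightarrow> pd c G p = 0"
  by (simp add: pd_def dep_def)

lemma apply_vf_eq_sum:
  "finite S \<Longrightarrow> dep G \<subseteq> S \<Longrightarrow> apply_vf X G p = (\<Sum>c\<in>S. X c p * pd c G p)"
  unfolding apply_vf_def by (rule sum.mono_neutral_left) (auto simp: pd_eq_0)

lemma apply_vf_cong:
  assumes "polynomial_on C G" and "\<And>c. c \<in> C \<Longrightarrow> X c p = Y c p"
  shows "apply_vf X G p = apply_vf Y G p"
proof -
  have "dep G \<subseteq> C" using dep_polynomial_on[OF assms(1)] by simp
  then show ?thesis unfolding apply_vf_def using assms(2) by (intro sum.cong) auto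
qed

lemma polynomial_field_differentiable:
  "polynomial G \<Longrightarrow> (\<lambda>s. G (p(c := s))) field_differentiable at x"
proof (induction rule: polynomial_on.induct)
  case (coord c')
  then show ?case by (cases "c' = c") simp_all
qed (auto intro: derivative_intros)

lemma pd_coord: "pd c' (\<lambda>p. p c) p = (if c' = c then 1 else 0)"
  by (auto simp: pd_def)

lemma pd_add:
  "polynomial G \<Longrightarrow> polynomial H \<Longrightarrow> pd c (\<lambda>p. G p + H p) p = pd c G p + pd c H p"
  by (simp add: pd_def polynomial_field_differentiable)

lemma pd_diff:
  "polynomial G \<Longrightarrow> polynomial H \<Longrightarrow> pd c (\<lambda>p. G p - H p) p = pd c G p - pd c H p"
  by (simp add: pd_def polynomial_field_differentiable)

lemma pd_mult:
  "polynomial G \<Longrightarrow> polynomial H \<Longrightarrow> pd c (\<lambda>p. G p * H p) p = pd c G p * H p + G p * pd c H p"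
  by (simp add: pd_def polynomial_field_differentiable)

lemma apply_vf_const [simp]: "apply_vf X (\<lambda>p. k) = (\<lambda>p. 0)"
  by (simp add: apply_vf_def fun_eq_iff)

lemma apply_vf_coord [simp]: "apply_vf X (\<lambda>p. p c) = X c"
  by (rule ext) (simp add: apply_vf_eq_sum[OF _ dep_coord] pd_coord)

lemma apply_vf_add:
  assumes "polynomial G" "polynomial H"
  shows "apply_vf X (\<lambda>p. G p + H p) = (\<lambda>p. apply_vf X G p + apply_vf X H p)"
proof
  fix p
  have S: "finite (dep G \<union> dep H)" using assms dep_polynomial_on by blast
  show "apply_vf X (\<lambda>p. G p + H p) p = apply_vf X G p + apply_vf X H p"
    using dep_binop[of "(+)" G H]
    by (simp add: apply_vf_eq_sum[OF S] pd_add assms algebra_simps sum.distrib)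
qed

lemma apply_vf_diff:
  assumes "polynomial G" "polynomial H"
  shows "apply_vf X (\<lambda>p. G p - H p) = (\<lambda>p. apply_vf X G p - apply_vf X H p)"
proof
  fix p
  have S: "finite (dep G \<union> dep H)" using assms dep_polynomial_on by blast
  show "apply_vf X (\<lambda>p. G p - H p) p = apply_vf X G p - apply_vf X H p"
    using dep_binop[of "(-)" G H]
    by (simp add: apply_vf_eq_sum[OF S] pd_diff assms algebra_simps sum_subtractf)
qed

lemma apply_vf_mult:
  assumes "polynomial G" "polynomial H"
  shows "apply_vf X (\<lambda>p. G p * H p) = (\<lambda>p. apply_vf X G p * H p + G p * apply_vf X H p)"
proof
  fix p
  have S: "finite (dep G \<union> dep H)" using assms dep_polynomial_on by blast
  show "apply_vf X (\<lambda>p. G p * H p) p = apply_vf X G p * H p + G p * apply_vf X H p"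
    using dep_binop[of "(*)" G H]
    by (simp add: apply_vf_eq_sum[OF S] pd_mult assms algebra_simps sum.distrib
        sum_distrib_left sum_distrib_right)
qed

lemma polynomial_on_apply_vf:
  assumes "polynomial_on C G" and X: "\<And>c. c \<in> C \<Longrightarrow> polynomial_on C (X c)"
  shows "polynomial_on C (apply_vf X G)"
  using assms(1)
proof (induction rule: polynomial_on.induct)
  case (add G H) then show ?case
    by (simp add: apply_vf_add polynomial_on_polynomial polynomial_on.add)
next
  case (diff G H) then show ?case
    by (simp add: apply_vf_diff polynomial_on_polynomial polynomial_on.diff)
next
  case (mult G H) then show ?case
    by (simp add: apply_vf_mult polynomial_on_polynomial polynomial_on.add polynomial_on.mult)
qed (simp_all add: X polynomial_on.const)

lemma polynomial_on_funpow_apply_vf: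
  "polynomial_on C G \<Longrightarrow> (\<And>c. c \<in> C \<Longrightarrow> polynomial_on C (X c)) \<Longrightarrow>
    polynomial_on C ((apply_vf X ^^ n) G)"
  by (induction n) (simp_all add: polynomial_on_apply_vf)

definition polynomial_vf :: "vfield \<Rightarrow> bool" where
  "polynomial_vf X \<longleftrightarrow> (\<forall>c. polynomial (X c))"

lemma polynomial_apply_vf: "polynomial_vf X \<Longrightarrow> polynomial G \<Longrightarrow> polynomial (apply_vf X G)"
  by (simp add: polynomial_on_apply_vf polynomial_vf_def)

lemma polynomial_funpow_apply_vf:
  "polynomial_vf X \<Longrightarrow> polynomial G \<Longrightarrow> polynomial ((apply_vf X ^^ n) G)"
  by (simp add: polynomial_on_funpow_apply_vf polynomial_vf_def)

lemma apply_vf_commute: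
  assumes X: "polynomial_vf X" and Y: "polynomial_vf Y"
    and XY: "\<And>c p. lie_bracket X Y c p = 0" and "polynomial G"
  shows "apply_vf X (apply_vf Y G) = apply_vf Y (apply_vf X G)"
  using \<open>polynomial G\<close>
proof (induction rule: polynomial_on.induct)
  case (coord c) then show ?case
    using XY[of c] by (simp add: lie_bracket_def fun_eq_iff)
next
  case (add G H) then show ?case
    by (simp add: apply_vf_add polynomial_apply_vf X Y)
next
  case (diff G H) then show ?case
    by (simp add: apply_vf_diff polynomial_apply_vf X Y)
next
  case (mult G H) then show ?case
    by (simp add: apply_vf_add apply_vf_mult polynomial_apply_vf polynomial_on.mult X Y
        algebra_simps)
qed simp

lemma funpow_apply_vf_commute:
  assumes "polynomial_vf X" "polynomial_vf Y" "\<And>c p. lie_bracket X Y c p = 0" "polynomial G"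
  shows "apply_vf X ((apply_vf Y ^^ n) G) = (apply_vf Y ^^ n) (apply_vf X G)"
  by (induction n) (simp_all add: apply_vf_commute[OF assms(1-3)] polynomial_funpow_apply_vf assms)

lemma funpow_apply_vf_diff:
  "polynomial_vf X \<Longrightarrow> polynomial G \<Longrightarrow> polynomial H \<Longrightarrow>
    (apply_vf X ^^ n) (\<lambda>p. G p - H p) = (\<lambda>p. (apply_vf X ^^ n) G p - (apply_vf X ^^ n) H p)"
  by (induction n) (simp_all add: apply_vf_diff polynomial_funpow_apply_vf)

section \<open>Total derivatives\<close>

lemma shift_commute: "shift a (shift b \<sigma>) = shift b (shift a \<sigma>)"
  unfolding shift_def by (cases "a = b") (auto simp: fun_upd_twist)

abbreviation jet_coords :: "coord set" where
  "jet_coords \<equiv> range Base \<union> range U"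

lemma jet_polynomial_totD: "c \<in> jet_coords \<Longrightarrow> polynomial_on jet_coords (totD a c)"
proof (cases c)
  case (U \<sigma>) then show ?thesis by (simp add: totD_def polynomial_on.coord)
qed (auto simp: totD_def intro: polynomial_on.const)

lemma polynomial_vf_totD: "polynomial_vf (totD a)"
  unfolding polynomial_vf_def
proof
  fix c show "polynomial (totD a c)"
    by (cases c) (auto simp: totD_def intro: polynomial_on.intros)
qed

lemma lie_bracket_totD: "lie_bracket (totD a) (totD b) c p = 0"
  by (cases c) (simp_all add: lie_bracket_def totD_def shift_commute)

lemma Dsig_shift:
  assumes "polynomial G"
  shows "apply_vf (totD a) (Dsig \<sigma> G) = Dsig (shift a \<sigma>) G"
proof -
  have commute: "apply_vf (totD a') ((apply_vf (totD b) ^^ n) H) =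
      (apply_vf (totD b) ^^ n) (apply_vf (totD a') H)" if "polynomial H" for a' b n H
    by (rule funpow_apply_vf_commute) (simp_all add: polynomial_vf_totD lie_bracket_totD that)
  show ?thesis
    by (cases a) (simp_all add: Dsig_def shift_def commute assms polynomial_funpow_apply_vf
        polynomial_vf_totD funpow_swap1)
qed

lemma jet_polynomial_Dsig: "polynomial_on jet_coords G \<Longrightarrow> polynomial_on jet_coords (Dsig \<sigma> G)"
  unfolding Dsig_def by (intro polynomial_on_funpow_apply_vf jet_polynomial_totD)

lemma jet_polynomial_heavenly: "polynomial_on jet_coords heavenly"
  unfolding heavenly_def[abs_def] power2_eq_square
  by (intro polynomial_on.intros) auto

section \<open>The covering fields\<close>

lemma polynomial_Tgen: "polynomial Tgen"
  unfolding Tgen_def[abs_def] by (intro polynomial_on.intros) simp_all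

lemma polynomial_Xgen: "polynomial Xgen"
  unfolding Xgen_def[abs_def] by (intro polynomial_on.intros) simp_all

lemma tD_Vy [simp]: "tD Vy = tDy" and tD_Vz [simp]: "tD Vz = tDz"
  by (simp_all add: tD_def)

lemma tD_jet_coord: "c \<in> jet_coords \<Longrightarrow> tD a c = totD a c"
  by (cases a) (auto simp: tD_def tDgen_def tDy_def tDz_def)

lemma polynomial_vf_tDy: "polynomial_vf tDy"
  unfolding polynomial_vf_def
proof
  fix c show "polynomial (tDy c)"
    by (cases c) (auto simp: tDy_def totD_def intro: polynomial_on.intros)
qed

lemma polynomial_vf_tDz: "polynomial_vf tDz"
  unfolding polynomial_vf_def
proof
  fix c show "polynomial (tDz c)"
    by (cases c) (auto simp: tDz_def totD_def intro: polynomial_on.intros)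
qed

lemma polynomial_vf_tD: "polynomial_vf (tD a)"
  unfolding polynomial_vf_def
proof
  fix c show "polynomial (tD a c)"
    using polynomial_vf_tDy polynomial_vf_tDz polynomial_Tgen polynomial_Xgen
    by (cases a; cases c)
      (auto simp: polynomial_vf_def tD_def tDgen_def totD_def polynomial_funpow_apply_vf
        intro: polynomial_on.intros)
qed

lemma apply_vf_tD_Dsig:
  assumes "polynomial_on jet_coords G"
  shows "apply_vf (tD a) (Dsig \<sigma> G) = Dsig (shift a \<sigma>) G"
proof
  fix p
  have "apply_vf (tD a) (Dsig \<sigma> G) p = apply_vf (totD a) (Dsig \<sigma> G) p"
    by (rule apply_vf_cong[OF jet_polynomial_Dsig[OF assms]]) (simp add: tD_jet_coord)
  then show "apply_vf (tD a) (Dsig \<sigma> G) p = Dsig (shift a \<sigma>) G p"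
    by (simp add: Dsig_shift polynomial_on_polynomial[OF assms])
qed

lemma lie_bracket_jet_coord:
  assumes "c \<in> jet_coords"
  shows "lie_bracket (tD a) (tD b) c p = 0"
proof -
  have "apply_vf (tD a') (tD b' c) p = apply_vf (totD a') (totD b' c) p" for a' b'
    unfolding tD_jet_coord[OF assms]
    by (rule apply_vf_cong[OF jet_polynomial_totD[OF assms]]) (simp add: tD_jet_coord)
  then show ?thesis using lie_bracket_totD[of a b c p] by (simp add: lie_bracket_def)
qed

lemma lie_bracket_tDy_tDz: "lie_bracket tDy tDz c p = 0"
proof (cases c)
  case (V i j) then show ?thesis by (simp add: lie_bracket_def tDy_def tDz_def)
qed (use lie_bracket_jet_coord[of c Vy Vz] in simp_all)

lemma funpow_tDy_coord: "(apply_vf tDy ^^ n) (\<lambda>p. p (V i j)) = (\<lambda>p. p (V (i + n) j))"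
  by (induction n) (simp_all add: tDy_def)

lemma funpow_tDz_coord: "(apply_vf tDz ^^ n) (\<lambda>p. p (V i j)) = (\<lambda>p. p (V i (j + n)))"
  by (induction n) (simp_all add: tDz_def)

lemma tD_V: "tD a (V i j) = (apply_vf tDy ^^ i) ((apply_vf tDz ^^ j) (tD a (V 0 0)))"
  by (cases a) (simp_all add: tD_def tDgen_def tDy_def tDz_def funpow_tDy_coord funpow_tDz_coord)

lemma lie_bracket_tD_tDy: "lie_bracket (tD a) tDy c p = 0"
proof (cases "c \<in> jet_coords")
  case True then show ?thesis using lie_bracket_jet_coord[of c a Vy] by simp
next
  case False
  then obtain i j where "c = V i j" by (cases c) auto
  then show ?thesis
    using tD_V[of a "Suc i" j] tD_V[of a i j] by (simp add: lie_bracket_def tDy_def)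
qed

lemma lie_bracket_tD_tDz: "lie_bracket (tD a) tDz c p = 0"
proof (cases "c \<in> jet_coords")
  case True then show ?thesis using lie_bracket_jet_coord[of c a Vz] by simp
next
  case False
  then obtain i j where c: "c = V i j" by (cases c) auto
  let ?R = "(apply_vf tDz ^^ j) (tD a (V 0 0))"
  have "apply_vf tDz ((apply_vf tDy ^^ i) ?R) = (apply_vf tDy ^^ i) (apply_vf tDz ?R)"
  proof (rule funpow_apply_vf_commute[OF polynomial_vf_tDz polynomial_vf_tDy])
    show "lie_bracket tDz tDy c' p' = 0" for c' p'
      using lie_bracket_tDy_tDz[of c' p'] by (simp add: lie_bracket_def)
    show "polynomial ?R"
      by (intro polynomial_funpow_apply_vf polynomial_vf_tDz)
        (use polynomial_vf_tD in \<open>simp add: polynomial_vf_def\<close>)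
  qed
  then show ?thesis
    using tD_V[of a i "Suc j"] tD_V[of a i j] by (simp add: c lie_bracket_def tDz_def)
qed

lemma apply_vf_tD_funpow:
  assumes "polynomial G"
  shows "apply_vf (tD a) ((apply_vf tDy ^^ i) ((apply_vf tDz ^^ j) G)) =
    (apply_vf tDy ^^ i) ((apply_vf tDz ^^ j) (apply_vf (tD a) G))"
  by (simp add: funpow_apply_vf_commute polynomial_vf_tD polynomial_vf_tDy polynomial_vf_tDz
      lie_bracket_tD_tDy lie_bracket_tD_tDz polynomial_funpow_apply_vf assms)

section \<open>The differential ideal of the equation\<close>

inductive heavenly_ideal :: "fn \<Rightarrow> bool" where
  generator: "heavenly_ideal (Dsig \<sigma> heavenly)"
| mult: "polynomial H \<Longrightarrow> heavenly_ideal G \<Longrightarrow> heavenly_ideal (\<lambda>p. H p * G p)"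
| add: "heavenly_ideal G \<Longrightarrow> heavenly_ideal H \<Longrightarrow> heavenly_ideal (\<lambda>p. G p + H p)"
| diff: "heavenly_ideal G \<Longrightarrow> heavenly_ideal H \<Longrightarrow> heavenly_ideal (\<lambda>p. G p - H p)"

lemma heavenly_ideal_polynomial: "heavenly_ideal G \<Longrightarrow> polynomial G"
  by (induction rule: heavenly_ideal.induct)
    (auto intro: polynomial_on.intros polynomial_on_polynomial jet_polynomial_Dsig
      jet_polynomial_heavenly)

lemma heavenly_ideal_vanishes: "heavenly_ideal G \<Longrightarrow> p \<in> Einf \<Longrightarrow> G p = 0"
  by (induction rule: heavenly_ideal.induct) (auto simp: Einf_def)

lemma heavenly_ideal_apply_vf_tD: "heavenly_ideal G \<Longrightarrow> heavenly_ideal (apply_vf (tD a) G)"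
proof (induction rule: heavenly_ideal.induct)
  case (generator \<sigma>) then show ?case
    by (simp add: apply_vf_tD_Dsig jet_polynomial_heavenly heavenly_ideal.generator)
next
  case (mult H G) then show ?case
    by (simp add: apply_vf_mult heavenly_ideal_polynomial polynomial_apply_vf polynomial_vf_tD
        heavenly_ideal.add heavenly_ideal.mult)
next
  case (add G H) then show ?case
    by (simp add: apply_vf_add heavenly_ideal_polynomial heavenly_ideal.add)
next
  case (diff G H) then show ?case
    by (simp add: apply_vf_diff heavenly_ideal_polynomial heavenly_ideal.diff)
qed

lemma heavenly_ideal_funpow:
  assumes "heavenly_ideal G"
  shows "heavenly_ideal ((apply_vf tDy ^^ i) ((apply_vf tDz ^^ j) G))"
proof -
  have "heavenly_ideal ((apply_vf tDz ^^ j) G)"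
    using heavenly_ideal_apply_vf_tD[of _ Vz] assms by (induction j) simp_all
  then show ?thesis
    using heavenly_ideal_apply_vf_tD[of _ Vy] by (induction i) simp_all
qed

lemma mi_apply [simp]:
  "mi a b c d Vt = a" "mi a b c d Vx = b" "mi a b c d Vy = c" "mi a b c d Vz = d"
  by (simp_all add: mi_def)

lemma shift_mi [simp]:
  "shift Vt (mi a b c d) = mi (Suc a) b c d" "shift Vx (mi a b c d) = mi a (Suc b) c d"
  "shift Vy (mi a b c d) = mi a b (Suc c) d" "shift Vz (mi a b c d) = mi a b c (Suc d)"
  by (auto simp: shift_def mi_def fun_eq_iff split: var.split)

lemma zero_curvature_identity:
  "apply_vf (tD Vt) Xgen p - apply_vf (tD Vx) Tgen p =
     p (V 1 0) * Dsig (mi 0 0 0 1) heavenly p - p (V 0 1) * Dsig (mi 0 0 1 0) heavenly p"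
  by (simp add: Dsig_def Tgen_def[abs_def] Xgen_def[abs_def] heavenly_def[abs_def]
      power2_eq_square numeral_2_eq_2 apply_vf_add apply_vf_diff apply_vf_mult polynomial_on.intros
      tD_def tDgen_def totD_def tDy_def tDz_def)
    (simp add: algebra_simps)

lemma lie_bracket_tD_Vt_Vx:
  assumes "p \<in> Einf"
  shows "lie_bracket (tD Vt) (tD Vx) c p = 0"
proof (cases "c \<in> jet_coords")
  case True then show ?thesis by (rule lie_bracket_jet_coord)
next
  case False
  then obtain i j where c: "c = V i j" by (cases c) auto
  let ?YZ = "\<lambda>G. (apply_vf tDy ^^ i) ((apply_vf tDz ^^ j) G)"
  let ?T = "apply_vf (tD Vt) Xgen" and ?X = "apply_vf (tD Vx) Tgen"
  have polys: "polynomial ?T" "polynomial ?X" "polynomial ((apply_vf tDz ^^ j) ?T)"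
    "polynomial ((apply_vf tDz ^^ j) ?X)"
    by (simp_all add: polynomial_apply_vf polynomial_funpow_apply_vf polynomial_vf_tD
        polynomial_vf_tDz polynomial_Tgen polynomial_Xgen)
  have curvature: "heavenly_ideal (\<lambda>p. ?T p - ?X p)"
    unfolding zero_curvature_identity
    by (intro heavenly_ideal.diff heavenly_ideal.mult heavenly_ideal.generator polynomial_on.coord)
      simp_all
  have "tD Vt c = ?YZ Tgen" "tD Vx c = ?YZ Xgen"
    by (simp_all add: c tD_def tDgen_def)
  then have "lie_bracket (tD Vt) (tD Vx) c p = ?YZ ?T p - ?YZ ?X p"
    by (simp add: lie_bracket_def apply_vf_tD_funpow polynomial_Tgen polynomial_Xgen)
  also have "\<dots> = ?YZ (\<lambda>p. ?T p - ?X p) p"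
    by (simp add: funpow_apply_vf_diff polynomial_vf_tDy polynomial_vf_tDz polys)
  also have "\<dots> = 0"
    by (rule heavenly_ideal_vanishes[OF heavenly_ideal_funpow[OF curvature] assms])
  finally show ?thesis .
qed

theorem mainTheorem1:
  shows "\<forall>a b c. \<forall>p\<in>Einf. lie_bracket (tD a) (tD b) c p = 0"
proof (intro allI ballI)
  fix a b c p assume p: "p \<in> Einf"
  have yz: "lie_bracket (tD a') (tD b') c p = 0" if "b' \<in> {Vy, Vz}" for a' b'
    using that lie_bracket_tD_tDy lie_bracket_tD_tDz by auto
  have swap: "lie_bracket (tD b) (tD a) c p = 0 \<Longrightarrow> lie_bracket (tD a) (tD b) c p = 0"
    by (simp add: lie_bracket_def)
  consider "b \<in> {Vy, Vz}" | "a \<in> {Vy, Vz}" | "a = b" | "a = Vt" "b = Vx" | "a = Vx" "b = Vt"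
    by (cases a; cases b) auto
  then show "lie_bracket (tD a) (tD b) c p = 0"
  proof cases
    case 1 then show ?thesis by (rule yz)
  next
    case 2 then show ?thesis by (intro swap yz)
  next
    case 3 then show ?thesis by (simp add: lie_bracket_def)
  next
    case 4 then show ?thesis using lie_bracket_tD_Vt_Vx[OF p] by simp
  next
    case 5 then show ?thesis using lie_bracket_tD_Vt_Vx[OF p] by (intro swap) simp
  qed
qed

end
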